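(* Let $c, r$ be positive integers. Call a set of squares of an $m \times n$ grid a valid $(c,r)$-tree configuration if every column contains exactly $c$ of the chosen squares (trees), every row contains exactly $r$ trees, and no two trees are in squares adjacent horizontally, vertically, or diagonally. Then: (i) if a valid $(c,r)$-tree configuration exists on an $m \times n$ grid with $(m,n) \neq (1,1)$, then $m \ge 4c$ and $n \ge 4r$ (the $1 \times 1$ grid admits one only when $c=r=1$); (ii) the $4c \times 4r$ grid admits exactly two valid $(c,r)$-tree configurations. Index rows $1,\dots,4c$ from top and columns $1,\dots,4r$ from left. These configurations are the following. The first has trees at $(2i-1,2j)$ for $1\le i\le c,\ 1\le j\le r$; at $(2i,2j)$ for $1\le i\le c,\ r<j\le 2r$; at $(2i-1,2j-1)$ for $c<i\le 2c,\ 1\le j\le r$; and at $(2i,2j-1)$ for $c<i\le 2c,\ r<j\le 2r$. The second is the image of the first under the row reflection $(k,\ell)\mapsto(4c+1-k,\ell)$.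
   Context: A valid configuration of trees for a $(c,r)$-tree Parks puzzle on an $m\times n$ grid is a set of squares satisfying the column, row and non-adjacency conditions stated in the claim. The paper calls the two configurations on the $4c\times 4r$ grid "Shuriken arrangements". Equivalently: divide the $4c\times 4r$ grid into $2\times 2$ boxes and into four quadrants of size $2c \times 2r$. Within each quadrant every box has its tree in the same position. In the first arrangement this position is the top-right cell of the box in the upper-left quadrant, the bottom-right cell in the upper-right quadrant, the top-left cell in the lower-left quadrant, and the bottom-left cell in the lower-right quadrant. *)

theory Defs
  imports Main
begin

text \<open>Squares of an m x n grid are pairs (k, l) with row index k in {1..m}
  (counted from the top) and column index l in {1..n} (counted from the left).\<close>

definition adjacent :: "nat \<times> nat \<Rightarrow> nat \<times> nat \<Rightarrow> bool" where
  "adjacent p q \<longleftrightarrow> p \<noteq> q \<and>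
     fst p \<le> fst q + 1 \<and> fst q \<le> fst p + 1 \<and>
     snd p \<le> snd q + 1 \<and> snd q \<le> snd p + 1"

definition valid_config :: "nat \<Rightarrow> nat \<Rightarrow> nat \<Rightarrow> nat \<Rightarrow> (nat \<times> nat) set \<Rightarrow> bool" where
  "valid_config m n c r S \<longleftrightarrow>
     S \<subseteq> {1..m} \<times> {1..n} \<and>
     (\<forall>l\<in>{1..n}. card {k. (k, l) \<in> S} = c) \<and>
     (\<forall>k\<in>{1..m}. card {l. (k, l) \<in> S} = r) \<and>
     (\<forall>p\<in>S. \<forall>q\<in>S. \<not> adjacent p q)"

definition shuriken1 :: "nat \<Rightarrow> nat \<Rightarrow> (nat \<times> nat) set" where
  "shuriken1 c r =
     {(2*i - 1, 2*j) | i j. 1 \<le> i \<and> i \<le> c \<and> 1 \<le> j \<and> j \<le> r} \<union>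
     {(2*i, 2*j) | i j. 1 \<le> i \<and> i \<le> c \<and> r < j \<and> j \<le> 2*r} \<union>
     {(2*i - 1, 2*j - 1) | i j. c < i \<and> i \<le> 2*c \<and> 1 \<le> j \<and> j \<le> r} \<union>
     {(2*i, 2*j - 1) | i j. c < i \<and> i \<le> 2*c \<and> r < j \<and> j \<le> 2*r}"

definition shuriken2 :: "nat \<Rightarrow> nat \<Rightarrow> (nat \<times> nat) set" where
  "shuriken2 c r = (\<lambda>(k, l). (4*c + 1 - k, l)) ` shuriken1 c r"

end

theory Submission
  imports Defs
begin

text \<open>
  Two consecutive rows carry 2r trees, no two of them in neighbouring columns, so they meet 2r
  distinct column blocks {2b - 1, 2b}; hence n \<ge> 4r - 1, and n = 4r - 1 is impossible because
  the lone last column 4r - 1 would then be occupied in every pair of rows, next to any tree of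
  column 4r - 2. On the 4c \<times> 4r grid the same count puts exactly one tree into every 2 \<times> 2 box.
  If the tree of box (a, b) lies in its right column, so does the tree of box (a, b + 1); since
  every column 2b holds c trees, this property depends on a alone, say X a, and symmetrically
  lying in the lower row depends on b alone, say Y b. Diagonal non-adjacency forbids X and Y to
  switch in the same direction at the same place, and with |X| = c, |Y| = r this leaves only the
  thresholds X = (\<le> c), Y = (> r) and X = (> c), Y = (\<le> r): the two Shuriken arrangements.
\<close>

section \<open>Blocks of two consecutive indices\<close>

text \<open>Rows 2a - 1 and 2a form row block a, and likewise for columns; a box is the product of a
  row block and a column block.\<close>

abbreviation block :: "nat \<Rightarrow> nat" where
  "block k \<equiv> (k + 1) div 2"

lemma block_double_pred: "1 \<le> a \<Longrightarrow> block (2 * a - 1) = a"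
  by (cases a) simp_all

lemma even_block: "even k \<Longrightarrow> k = 2 * block k"
  by (auto elim: evenE)

lemma odd_block: "odd k \<Longrightarrow> k = 2 * block k - 1"
  by (auto elim: oddE)

lemma block_eq_iff: "1 \<le> a \<Longrightarrow> block k = a \<longleftrightarrow> k = 2 * a - 1 \<or> k = 2 * a"
  using even_block[of k] odd_block[of k] block_double_pred[of a] by auto

lemma block_parity_eq: "block k = block k' \<Longrightarrow> (even k \<longleftrightarrow> even k') \<Longrightarrow> k = k'"
  by (metis even_block odd_block)

lemma block_cases: "block k = block k' \<Longrightarrow> k = k' \<or> k' = k + 1 \<or> k = k' + 1"
  by (cases "block k = 0") (use block_eq_iff[of "block k" k] block_eq_iff[of "block k" k'] in auto)

lemma block_crossing: "k \<le> k' \<Longrightarrow> k' \<le> k + 1 \<Longrightarrow> block k = block k' \<or> even k \<and> k' = k + 1"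
  by (cases "k' = k") (auto elim!: oddE)

lemma block_reflect: "1 \<le> k \<Longrightarrow> k \<le> 2 * N \<Longrightarrow> block (2 * N + 1 - k) = N + 1 - block k"
  by (cases "even k") (auto elim!: evenE oddE simp: Suc_diff_le)

lemma double_block_le:
  assumes "even m" "k \<le> m"
  shows "2 * block k \<le> m"
proof (cases "even k")
  case True
  then show ?thesis
    using assms(2) by (metis even_block)
next
  case False
  then have "k \<noteq> m"
    using assms(1) by auto
  then have "k + 1 \<le> m"
    using assms(2) by simp
  then show ?thesis
    using False odd_block[of k] by simp
qed

lemma near_parity_eq: "l \<le> l' + 1 \<Longrightarrow> l' \<le> l + 1 \<Longrightarrow> (even l \<longleftrightarrow> even l') \<Longrightarrow> l = (l' :: nat)"
  by (cases "l' = l + 1 \<or> l = l' + 1") auto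

lemma block_mem: "k \<in> {1..2 * N} \<Longrightarrow> block k \<in> {1..N}"
  by auto

section \<open>Lower bounds on the grid size\<close>

lemma valid_config_subset:
  assumes "valid_config m n c r S" "(k, l) \<in> S"
  shows "1 \<le> k \<and> k \<le> m \<and> 1 \<le> l \<and> l \<le> n"
  using assms unfolding valid_config_def by auto

lemma valid_config_column:
  "valid_config m n c r S \<Longrightarrow> 1 \<le> l \<Longrightarrow> l \<le> n \<Longrightarrow> card {k. (k, l) \<in> S} = c"
  unfolding valid_config_def by auto

lemma valid_config_row:
  "valid_config m n c r S \<Longrightarrow> 1 \<le> k \<Longrightarrow> k \<le> m \<Longrightarrow> card {l. (k, l) \<in> S} = r"
  unfolding valid_config_def by auto

lemma valid_config_near_eq:
  assumes "valid_config m n c r S" "(k, l) \<in> S" "(k', l') \<in> S"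
    and "k \<le> k' + 1" "k' \<le> k + 1" "l \<le> l' + 1" "l' \<le> l + 1"
  shows "k = k' \<and> l = l'"
  using assms unfolding valid_config_def adjacent_def by fastforce

lemma valid_config_converse:
  assumes "valid_config m n c r S"
  shows "valid_config n m r c (S\<inverse>)"
  using assms unfolding valid_config_def adjacent_def by (auto 0 3)

lemma valid_config_block_unique:
  assumes "valid_config m n c r S" "(k, l) \<in> S" "(k', l') \<in> S"
    and "block k = block k'" "block l = block l'"
  shows "k = k' \<and> l = l'"
proof -
  have "k \<le> k' + 1" "k' \<le> k + 1" "l \<le> l' + 1" "l' \<le> l + 1"
    using block_cases[OF assms(4)] block_cases[OF assms(5)] by auto
  then show ?thesis
    using valid_config_near_eq[OF assms(1-3)] by blast
qed

lemma valid_config_column_occupied: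
  assumes "valid_config m n c r S" "0 < c" "1 \<le> l" "l \<le> n"
  obtains k where "(k, l) \<in> S"
proof -
  have "{k. (k, l) \<in> S} \<noteq> {}"
    using valid_config_column[OF assms(1,3,4)] \<open>0 < c\<close> by force
  then show ?thesis using that by blast
qed

lemma valid_config_one_row:
  assumes S: "valid_config 1 n c r S" and "0 < c"
  shows "n \<le> 1"
proof (rule ccontr)
  assume "\<not> n \<le> 1"
  obtain k1 k2 where trees: "(k1, 1) \<in> S" "(k2, 2) \<in> S"
    using valid_config_column_occupied[OF S \<open>0 < c\<close>, of 1]
      valid_config_column_occupied[OF S \<open>0 < c\<close>, of 2] \<open>\<not> n \<le> 1\<close> by force
  then have "k1 = 1" "k2 = 1"
    using valid_config_subset[OF S] by (meson le_antisym)+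
  with trees show False
    using valid_config_near_eq[OF S, of 1 1 1 2] by simp
qed

lemma sparse_inj_on_block:
  assumes "\<And>x. x \<in> A \<Longrightarrow> x + 1 \<notin> A"
  shows "inj_on block A"
proof (rule inj_onI)
  fix x y assume "x \<in> A" "y \<in> A" "block x = block y"
  moreover have "x = y \<or> y = x + 1 \<or> x = y + 1"
    using \<open>block x = block y\<close> by (rule block_cases)
  ultimately show "x = y" using assms by blast
qed

lemma row_pair_blocks:
  assumes S: "valid_config m n c r S" and k: "1 \<le> k" "k < m"
  shows "card (block ` {l. (k, l) \<in> S \<or> (k + 1, l) \<in> S}) = 2 * r"
    and "block ` {l. (k, l) \<in> S \<or> (k + 1, l) \<in> S} \<subseteq> {1..(n + 1) div 2}"
proof -
  let ?A = "{l. (k, l) \<in> S \<or> (k + 1, l) \<in> S}"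
  have rows: "finite {l. (k, l) \<in> S}" "finite {l. (k + 1, l) \<in> S}"
    using valid_config_subset[OF S] by (auto intro: finite_subset[of _ "{1..n}"])
  have disjoint: "{l. (k, l) \<in> S} \<inter> {l. (k + 1, l) \<in> S} = {}"
    using valid_config_near_eq[OF S] by fastforce
  have "?A = {l. (k, l) \<in> S} \<union> {l. (k + 1, l) \<in> S}"
    by auto
  also have "card \<dots> = 2 * r"
    unfolding card_Un_disjoint[OF rows disjoint]
    using valid_config_row[OF S, of k] valid_config_row[OF S, of "k + 1"] k by simp
  finally have "card ?A = 2 * r" .
  moreover have "inj_on block ?A"
  proof (rule sparse_inj_on_block)
    fix l assume "l \<in> ?A"
    then show "l + 1 \<notin> ?A"
      using valid_config_near_eq[OF S, of _ l _ "l + 1"] by fastforce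
  qed
  ultimately show "card (block ` ?A) = 2 * r"
    by (simp add: card_image)
  have "1 \<le> block l \<and> block l \<le> (n + 1) div 2" if "l \<in> ?A" for l
  proof -
    have "1 \<le> l" "l \<le> n"
      using that valid_config_subset[OF S] by blast+
    then show ?thesis by (simp add: div_le_mono)
  qed
  then show "block ` ?A \<subseteq> {1..(n + 1) div 2}" by auto
qed

lemma valid_config_weak_width_bound:
  assumes S: "valid_config m n c r S" and "2 \<le> m"
  shows "4 * r \<le> n + 1"
proof -
  have "2 * r \<le> card {1..(n + 1) div 2}"
    using card_mono[OF finite_atLeastAtMost row_pair_blocks(2)[OF S, of 1]]
      row_pair_blocks(1)[OF S, of 1] \<open>2 \<le> m\<close> by simp
  then show ?thesis by simp
qed

lemma row_pair_meets_block:
  assumes S: "valid_config m n c r S" and k: "1 \<le> k" "k < m"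
    and n: "n \<le> 4 * r" and b: "1 \<le> b" "b \<le> 2 * r"
  obtains l where "block l = b" "(k, l) \<in> S \<or> (k + 1, l) \<in> S"
proof -
  let ?A = "{l. (k, l) \<in> S \<or> (k + 1, l) \<in> S}"
  have "block ` ?A \<subseteq> {1..2 * r}"
    using row_pair_blocks(2)[OF S k] n by fastforce
  then have "block ` ?A = {1..2 * r}"
    using row_pair_blocks(1)[OF S k] by (simp add: card_subset_eq)
  then have "b \<in> block ` ?A"
    using b by simp
  then show ?thesis
    using that by blast
qed

lemma valid_config_width_bound:
  assumes S: "valid_config m n c r S" and "2 \<le> m" "0 < c"
  shows "4 * r \<le> n"
proof (rule ccontr)
  assume "\<not> 4 * r \<le> n"
  then have n: "n + 1 = 4 * r"
    using valid_config_weak_width_bound[OF S \<open>2 \<le> m\<close>] by simp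
  then have r: "1 \<le> r"
    by (cases r) simp_all
  then have "1 \<le> 4 * r - 2" "4 * r - 2 \<le> n"
    using n by linarith+
  then obtain k0 where k0: "(k0, 4 * r - 2) \<in> S"
    by (rule valid_config_column_occupied[OF S \<open>0 < c\<close>])
  define k where "k = (if k0 < m then k0 else k0 - 1)"
  have k: "1 \<le> k" "k < m" "k0 = k \<or> k0 = k + 1"
    using valid_config_subset[OF S k0] \<open>2 \<le> m\<close> unfolding k_def by auto
  \<comment> \<open>The last column block consists of column 4r - 1 alone, so it is occupied in every pair of rows.\<close>
  have "1 \<le> 2 * r" "n \<le> 4 * r"
    using n r by linarith+
  then obtain l where l: "block l = 2 * r" "(k, l) \<in> S \<or> (k + 1, l) \<in> S"
    using row_pair_meets_block[OF S k(1,2), of "2 * r"] by blast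
  then obtain k1 where k1: "(k1, l) \<in> S" "k1 = k \<or> k1 = k + 1"
    by blast
  then have "l \<le> n"
    using valid_config_subset[OF S] by blast
  moreover have "l = 2 * (2 * r) - 1 \<or> l = 2 * (2 * r)"
    using block_eq_iff[of "2 * r" l] l(1) r by simp
  ultimately have "l = 4 * r - 1"
    using n by linarith
  then have "4 * r - 2 \<le> l + 1" "l \<le> 4 * r - 2 + 1" "4 * r - 2 \<noteq> l"
    using r by linarith+
  moreover have "k0 \<le> k1 + 1" "k1 \<le> k0 + 1"
    using k(3) k1(2) by auto
  ultimately show False
    using valid_config_near_eq[OF S k0 k1(1)] by blast
qed

lemma valid_config_lower_bound:
  assumes "0 < c" "0 < r" "1 \<le> m" "1 \<le> n" "(m, n) \<noteq> (1, 1)"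
    and S: "valid_config m n c r S"
  shows "4 * c \<le> m \<and> 4 * r \<le> n"
proof -
  have S': "valid_config n m r c (S\<inverse>)"
    using valid_config_converse[OF S] .
  have "2 \<le> m"
  proof (rule ccontr)
    assume "\<not> 2 \<le> m"
    then have "m = 1" "2 \<le> n" using assms(3-5) by auto
    with S have "valid_config 1 n c r S" by simp
    then have "n \<le> 1" using valid_config_one_row \<open>0 < c\<close> by blast
    with \<open>2 \<le> n\<close> show False by simp
  qed
  moreover have "2 \<le> n"
  proof (rule ccontr)
    assume "\<not> 2 \<le> n"
    then have "n = 1" "2 \<le> m" using assms(3-5) by auto
    with S' have "valid_config 1 m r c (S\<inverse>)" by simp
    then have "m \<le> 1" using valid_config_one_row \<open>0 < r\<close> by blast
    with \<open>2 \<le> m\<close> show False by simp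
  qed
  ultimately show ?thesis
    using valid_config_width_bound[OF S _ \<open>0 < c\<close>] valid_config_width_bound[OF S' _ \<open>0 < r\<close>]
    by simp
qed

lemma valid_config_1_1_iff:
  assumes "0 < c" "0 < r"
  shows "(\<exists>S. valid_config 1 1 c r S) \<longleftrightarrow> c = 1 \<and> r = 1"
proof
  assume "\<exists>S. valid_config 1 1 c r S"
  then obtain S where S: "valid_config 1 1 c r S" ..
  have "{k. (k, 1) \<in> S} \<subseteq> {1}" "{l. (1, l) \<in> S} \<subseteq> {1}"
    using valid_config_subset[OF S] by fastforce+
  then have "card {k. (k, 1) \<in> S} \<le> 1" "card {l. (1, l) \<in> S} \<le> 1"
    using card_mono[of "{1::nat}"] by fastforce+
  then show "c = 1 \<and> r = 1"
    using valid_config_column[OF S, of 1] valid_config_row[OF S, of 1] assms by simp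
next
  assume "c = 1 \<and> r = 1"
  moreover have "valid_config 1 1 1 1 {(1, 1)}"
    unfolding valid_config_def adjacent_def by auto
  ultimately show "\<exists>S. valid_config 1 1 c r S" by blast
qed

section \<open>Valid configurations of the 4c \<times> 4r grid are box configurations\<close>

definition tree_right :: "(nat \<times> nat) set \<Rightarrow> nat \<Rightarrow> nat \<Rightarrow> bool" where
  "tree_right S a b \<longleftrightarrow> (\<exists>k. (k, 2 * b) \<in> S \<and> block k = a)"

lemma tree_right_iff_even:
  assumes S: "valid_config m n c r S" and kl: "(k, l) \<in> S"
  shows "tree_right S (block k) (block l) \<longleftrightarrow> even l"
proof
  assume "tree_right S (block k) (block l)"
  then obtain k' where "(k', 2 * block l) \<in> S" "block k' = block k"
    unfolding tree_right_def by blast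
  then have "l = 2 * block l"
    using valid_config_block_unique[OF S kl] by simp
  then show "even l"
    by (metis dvd_triv_left)
next
  assume "even l"
  then have "l = 2 * block l"
    by (rule even_block)
  then show "tree_right S (block k) (block l)"
    unfolding tree_right_def using kl by metis
qed

lemma card_tree_right:
  assumes S: "valid_config m n c r S" and b: "1 \<le> b" "2 * b \<le> n"
  shows "card {a. tree_right S a b} = c"
proof -
  have "{a. tree_right S a b} = block ` {k. (k, 2 * b) \<in> S}"
    unfolding tree_right_def by blast
  moreover have "inj_on block {k. (k, 2 * b) \<in> S}"
    using valid_config_block_unique[OF S] by (auto intro: inj_onI)
  ultimately show ?thesis
    using valid_config_column[OF S, of "2 * b"] b by (simp add: card_image)
qed

lemma finite_tree_right:
  assumes "valid_config m n c r S"
  shows "finite {a. tree_right S a b}"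
proof -
  have "{a. tree_right S a b} = block ` {k. (k, 2 * b) \<in> S}"
    unfolding tree_right_def by blast
  moreover have "finite {k. (k, 2 * b) \<in> S}"
    using valid_config_subset[OF assms] by (auto intro: finite_subset[of _ "{1..m}"])
  ultimately show ?thesis by simp
qed

lemma box_occupied:
  assumes S: "valid_config m (4 * r) c r S"
    and a: "1 \<le> a" "2 * a \<le> m" and b: "1 \<le> b" "b \<le> 2 * r"
  obtains k l where "(k, l) \<in> S" "block k = a" "block l = b"
proof -
  have "1 \<le> 2 * a - 1" "2 * a - 1 < m"
    using a by auto
  then obtain l where l: "block l = b" "(2 * a - 1, l) \<in> S \<or> (2 * a - 1 + 1, l) \<in> S"
    using row_pair_meets_block[OF S _ _ order.refl b] by blast
  moreover have "block (2 * a - 1) = a" "block (2 * a - 1 + 1) = a"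
    using a block_double_pred by simp_all
  ultimately show ?thesis
    using that by blast
qed

lemma tree_right_Suc:
  assumes S: "valid_config m (4 * r) c r S" and "even m"
    and right: "tree_right S a b" and b: "1 \<le> b" "b < 2 * r"
  shows "tree_right S a (b + 1)"
proof -
  obtain k where k: "(k, 2 * b) \<in> S" "block k = a"
    using right unfolding tree_right_def by blast
  have "1 \<le> a" "2 * a \<le> m"
    using valid_config_subset[OF S k(1)] k(2) double_block_le[OF \<open>even m\<close>, of k] by auto
  then obtain k' l' where kl': "(k', l') \<in> S" "block k' = a" "block l' = b + 1"
    using box_occupied[OF S, of a "b + 1"] b by auto
  \<comment> \<open>A tree in column 2b + 1 would touch the tree at (k, 2b), since k and k' lie in the same row block.\<close>
  have "l' \<noteq> 2 * b + 1"
  proof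
    assume "l' = 2 * b + 1"
    moreover have "k \<le> k' + 1" "k' \<le> k + 1"
      using block_cases[of k k'] k(2) kl'(2) by auto
    ultimately show False
      using valid_config_near_eq[OF S k(1) kl'(1)] by simp
  qed
  then have "l' = 2 * (b + 1)"
    using block_eq_iff[of "b + 1" l'] kl'(3) by simp
  then show ?thesis
    unfolding tree_right_def using kl' by blast
qed

lemma tree_right_column_invariant:
  assumes S: "valid_config m (4 * r) c r S" and "even m"
  shows "1 \<le> b \<Longrightarrow> b \<le> 2 * r \<Longrightarrow> tree_right S a b \<longleftrightarrow> tree_right S a 1"
proof (induction b rule: dec_induct)
  case (step b)
  \<comment> \<open>Rightness can only spread rightwards, and every column 2b carries exactly c trees.\<close>
  have "{a. tree_right S a b} \<subseteq> {a. tree_right S a (b + 1)}"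
    using tree_right_Suc[OF S \<open>even m\<close>] step by auto
  moreover have "card {a. tree_right S a b} = card {a. tree_right S a (b + 1)}"
    using card_tree_right[OF S, of b] card_tree_right[OF S, of "b + 1"] step by simp
  ultimately have "{a. tree_right S a b} = {a. tree_right S a (b + 1)}"
    using finite_tree_right[OF S] by (simp add: card_subset_eq)
  then show ?case
    using step by (metis Suc_eq_plus1 Suc_leD mem_Collect_eq)
qed simp

text \<open>The configuration with one tree per box, placed in the lower row of box (a, b) iff Y b
  and in the right column iff X a.\<close>

definition box_config :: "nat \<Rightarrow> nat \<Rightarrow> (nat \<Rightarrow> bool) \<Rightarrow> (nat \<Rightarrow> bool) \<Rightarrow> (nat \<times> nat) set" where
  "box_config c r X Y =
     {(k, l). k \<in> {1..4 * c} \<and> l \<in> {1..4 * r} \<and>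
        (even k \<longleftrightarrow> Y (block l)) \<and> (even l \<longleftrightarrow> X (block k))}"

lemma mem_box_config:
  "(k, l) \<in> box_config c r X Y \<longleftrightarrow> k \<in> {1..4 * c} \<and> l \<in> {1..4 * r} \<and>
     (even k \<longleftrightarrow> Y (block l)) \<and> (even l \<longleftrightarrow> X (block k))"
  unfolding box_config_def by simp

lemma valid_config_eq_box_config:
  assumes S: "valid_config (4 * c) (4 * r) c r S"
  shows "S = box_config c r (\<lambda>a. tree_right S a 1) (\<lambda>b. tree_right (S\<inverse>) b 1)"
    (is "S = box_config c r ?X ?Y")
proof -
  have S': "valid_config (4 * r) (4 * c) r c (S\<inverse>)"
    using valid_config_converse[OF S] .
  have tree: "k \<in> {1..4 * c} \<and> l \<in> {1..4 * r} \<and>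
      (even k \<longleftrightarrow> ?Y (block l)) \<and> (even l \<longleftrightarrow> ?X (block k))" if kl: "(k, l) \<in> S" for k l
  proof -
    have range: "k \<in> {1..4 * c}" "l \<in> {1..4 * r}"
      using valid_config_subset[OF S kl] by auto
    then have blocks: "block k \<in> {1..2 * c}" "block l \<in> {1..2 * r}"
      using block_mem[of k "2 * c"] block_mem[of l "2 * r"] by (simp_all add: mult.assoc)
    have "even l \<longleftrightarrow> tree_right S (block k) (block l)"
      using tree_right_iff_even[OF S kl] by simp
    also have "\<dots> \<longleftrightarrow> ?X (block k)"
      using tree_right_column_invariant[OF S, of "block l" "block k"] blocks(2) by simp
    finally have column_parity: "even l \<longleftrightarrow> ?X (block k)" .
    \<comment> \<open>Lying in the lower row of a box means lying in the right column of the transposed box.\<close>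
    have "even k \<longleftrightarrow> tree_right (S\<inverse>) (block l) (block k)"
      using tree_right_iff_even[OF S', of l k] kl by simp
    also have "\<dots> \<longleftrightarrow> ?Y (block l)"
      using tree_right_column_invariant[OF S', of "block k" "block l"] blocks(1) by simp
    finally have row_parity: "even k \<longleftrightarrow> ?Y (block l)" .
    show ?thesis
      using range row_parity column_parity by blast
  qed
  show ?thesis
  proof
    show "S \<subseteq> box_config c r ?X ?Y"
      unfolding box_config_def using tree by auto
  next
    show "box_config c r ?X ?Y \<subseteq> S"
    proof
      fix p assume "p \<in> box_config c r ?X ?Y"
      then obtain k l where p: "p = (k, l)" and kl: "k \<in> {1..4 * c}" "l \<in> {1..4 * r}"
          "even k \<longleftrightarrow> ?Y (block l)" "even l \<longleftrightarrow> ?X (block k)"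
        unfolding box_config_def by blast
      have "block k \<in> {1..2 * c}" "block l \<in> {1..2 * r}"
        using kl(1,2) block_mem[of k "2 * c"] block_mem[of l "2 * r"] by (simp_all add: mult.assoc)
      then obtain k' l' where kl': "(k', l') \<in> S" "block k' = block k" "block l' = block l"
        using box_occupied[OF S, of "block k" "block l"] by auto
      have "even k' \<longleftrightarrow> even k" "even l' \<longleftrightarrow> even l"
        using tree[OF kl'(1)] kl(3,4) kl'(2,3) by metis+
      then have "k' = k" "l' = l"
        using kl'(2,3) block_parity_eq by blast+
      then show "p \<in> S"
        using kl'(1) p by simp
    qed
  qed
qed

section \<open>Predicates that never switch in parallel are thresholds\<close>

lemma card_filter_not:
  "card {i \<in> {1..N}. \<not> P i} = N - card {i \<in> {1..N}. P i}"
proof -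
  have "card {i \<in> {1..N}. \<not> P i} = card ({1..N} - {i \<in> {1..N}. P i})"
    by (rule arg_cong[where f = card]) blast
  also have "\<dots> = N - card {i \<in> {1..N}. P i}"
    by (subst card_Diff_subset) auto
  finally show ?thesis .
qed

lemma card_filter_le: "card {i \<in> {1..N}. P i} \<le> N"
  using card_mono[OF finite_atLeastAtMost, of "{i \<in> {1..N}. P i}" 1 N] by fastforce

lemma no_descent_threshold:
  fixes P :: "nat \<Rightarrow> bool"
  assumes up: "\<And>j. 1 \<le> j \<Longrightarrow> j < N \<Longrightarrow> P j \<Longrightarrow> P (j + 1)"
    and card: "card {j \<in> {1..N}. P j} = k" and i: "1 \<le> i" "i \<le> N"
  shows "P i \<longleftrightarrow> N - k < i"
proof -
  have upward: "P j'" if "P j" "1 \<le> j" "j \<le> j'" "j' \<le> N" for j j'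
    using that(3,4)
  proof (induction j' rule: dec_induct)
    case (step j')
    then show ?case using up[of j'] \<open>1 \<le> j\<close> by simp
  qed (use that in simp)
  have "k \<le> N"
    using card card_filter_le by blast
  show ?thesis
  proof
    assume "P i"
    then have "{i..N} \<subseteq> {j \<in> {1..N}. P j}"
      using upward i by auto
    then have "card {i..N} \<le> k"
      using card card_mono[of "{j \<in> {1..N}. P j}" "{i..N}"] by (simp del: card_atLeastAtMost)
    then show "N - k < i"
      using i by simp
  next
    assume "N - k < i"
    show "P i"
    proof (rule ccontr)
      assume "\<not> P i"
      then have "{j \<in> {1..N}. P j} \<subseteq> {i + 1..N}"
        using upward[of _ i] i(2) by (force simp: Suc_le_eq)
      then have "k \<le> card {i + 1..N}"
        using card card_mono[of "{i + 1..N}"] by fastforce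
      then show False
        using \<open>N - k < i\<close> \<open>k \<le> N\<close> i by simp
    qed
  qed
qed

lemma no_ascent_threshold:
  fixes P :: "nat \<Rightarrow> bool"
  assumes down: "\<And>j. 1 \<le> j \<Longrightarrow> j < N \<Longrightarrow> P (j + 1) \<Longrightarrow> P j"
    and card: "card {j \<in> {1..N}. P j} = k" and i: "1 \<le> i" "i \<le> N"
  shows "P i \<longleftrightarrow> i \<le> k"
proof -
  have "k \<le> N"
    using card card_filter_le by blast
  have "\<not> P i \<longleftrightarrow> N - (N - k) < i"
    using no_descent_threshold[of N "\<lambda>j. \<not> P j"] down card_filter_not[of N P] card i by blast
  then show ?thesis
    using \<open>k \<le> N\<close> by auto
qed

definition no_parallel_switch :: "nat \<Rightarrow> nat \<Rightarrow> (nat \<Rightarrow> bool) \<Rightarrow> (nat \<Rightarrow> bool) \<Rightarrow> bool" where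
  "no_parallel_switch M N X Y \<longleftrightarrow> (\<forall>a \<in> {1..<M}. \<forall>b \<in> {1..<N}.
     \<not> (X a \<and> \<not> X (a + 1) \<and> Y b \<and> \<not> Y (b + 1)) \<and>
     \<not> (\<not> X a \<and> X (a + 1) \<and> \<not> Y b \<and> Y (b + 1)))"

lemma no_parallel_switch_thresholds:
  assumes "0 < c" "0 < r"
    and X: "card {a \<in> {1..2 * c}. X a} = c" and Y: "card {b \<in> {1..2 * r}. Y b} = r"
    and switch: "no_parallel_switch (2 * c) (2 * r) X Y"
  shows "(\<forall>a \<in> {1..2 * c}. X a \<longleftrightarrow> a \<le> c) \<and> (\<forall>b \<in> {1..2 * r}. Y b \<longleftrightarrow> r < b) \<or>
         (\<forall>a \<in> {1..2 * c}. X a \<longleftrightarrow> c < a) \<and> (\<forall>b \<in> {1..2 * r}. Y b \<longleftrightarrow> b \<le> r)"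
proof (cases "\<exists>a \<in> {1..<2 * c}. X a \<and> \<not> X (a + 1)")
  case True
  \<comment> \<open>A descent of X forbids descents of Y; the resulting ascent of Y at r forbids ascents of X.\<close>
  then have "Y (b + 1)" if "1 \<le> b" "b < 2 * r" "Y b" for b
    using switch that unfolding no_parallel_switch_def by fastforce
  then have Y_eq: "Y b \<longleftrightarrow> r < b" if "b \<in> {1..2 * r}" for b
    using no_descent_threshold[OF _ Y, of b] that by auto
  then have "\<not> Y r" "Y (r + 1)"
    using \<open>0 < r\<close> by auto
  then have "X a" if "1 \<le> a" "a < 2 * c" "X (a + 1)" for a
    using switch that \<open>0 < r\<close> unfolding no_parallel_switch_def by fastforce
  then have "X a \<longleftrightarrow> a \<le> c" if "a \<in> {1..2 * c}" for a
    using no_ascent_threshold[OF _ X, of a] that by auto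
  with Y_eq show ?thesis by blast
next
  case False
  then have X_eq: "X a \<longleftrightarrow> c < a" if "a \<in> {1..2 * c}" for a
    using no_descent_threshold[OF _ X, of a] that by auto
  then have "\<not> X c" "X (c + 1)"
    using \<open>0 < c\<close> by auto
  then have "Y b" if "1 \<le> b" "b < 2 * r" "Y (b + 1)" for b
    using switch that \<open>0 < c\<close> unfolding no_parallel_switch_def by fastforce
  then have "Y b \<longleftrightarrow> b \<le> r" if "b \<in> {1..2 * r}" for b
    using no_ascent_threshold[OF _ Y, of b] that by auto
  with X_eq show ?thesis by blast
qed

section \<open>Valid box configurations\<close>

lemma box_config_converse: "(box_config c r X Y)\<inverse> = box_config r c Y X"
  unfolding box_config_def by auto

lemma card_box_config_column:
  assumes l: "l \<in> {1..4 * r}"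
  shows "card {k. (k, l) \<in> box_config c r X Y} = card {a \<in> {1..2 * c}. X a \<longleftrightarrow> even l}"
proof -
  let ?K = "{k \<in> {1..2 * (2 * c)}. (even k \<longleftrightarrow> Y (block l)) \<and> (X (block k) \<longleftrightarrow> even l)}"
  have "{k. (k, l) \<in> box_config c r X Y} = ?K"
    using l unfolding mem_box_config by (auto simp: mult.assoc)
  moreover have "bij_betw block ?K {a \<in> {1..2 * c}. X a \<longleftrightarrow> even l}"
  proof (rule bij_betw_imageI)
    show "inj_on block ?K"
    proof (rule inj_onI)
      fix k k' assume "k \<in> ?K" "k' \<in> ?K" "block k = block k'"
      then show "k = k'"
        using block_parity_eq[of k k'] by simp
    qed
    show "block ` ?K = {a \<in> {1..2 * c}. X a \<longleftrightarrow> even l}"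
    proof
      show "block ` ?K \<subseteq> {a \<in> {1..2 * c}. X a \<longleftrightarrow> even l}"
        using block_mem by blast
    next
      show "{a \<in> {1..2 * c}. X a \<longleftrightarrow> even l} \<subseteq> block ` ?K"
      proof
        fix a assume a: "a \<in> {a \<in> {1..2 * c}. X a \<longleftrightarrow> even l}"
        define k where "k = (if Y (block l) then 2 * a else 2 * a - 1)"
        have "block k = a" "k \<in> {1..2 * (2 * c)}" "even k \<longleftrightarrow> Y (block l)"
          using a unfolding k_def by auto
        then have "k \<in> ?K"
          using a by simp
        with \<open>block k = a\<close> show "a \<in> block ` ?K"
          by blast
      qed
    qed
  qed
  ultimately show ?thesis
    by (simp add: bij_betw_same_card)
qed

lemma box_config_columns_iff:
  assumes "0 < r"
  shows "(\<forall>l \<in> {1..4 * r}. card {k. (k, l) \<in> box_config c r X Y} = c) \<longleftrightarrow>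
    card {a \<in> {1..2 * c}. X a} = c"
proof
  assume "\<forall>l \<in> {1..4 * r}. card {k. (k, l) \<in> box_config c r X Y} = c"
  then show "card {a \<in> {1..2 * c}. X a} = c"
    using card_box_config_column[of 2 r c X Y] assms by simp
next
  assume X: "card {a \<in> {1..2 * c}. X a} = c"
  \<comment> \<open>Odd columns count the complement of X, which also has c elements among the 2c row blocks.\<close>
  moreover have "card {a \<in> {1..2 * c}. \<not> X a} = c"
    using X card_filter_not[of "2 * c" X] by simp
  ultimately have parity: "card {a \<in> {1..2 * c}. X a \<longleftrightarrow> even l} = c" for l :: nat
    by (cases "even l") simp_all
  show "\<forall>l \<in> {1..4 * r}. card {k. (k, l) \<in> box_config c r X Y} = c"
  proof
    fix l assume "l \<in> {1..4 * r}"
    show "card {k. (k, l) \<in> box_config c r X Y} = c"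
      unfolding card_box_config_column[OF \<open>l \<in> {1..4 * r}\<close>] by (rule parity)
  qed
qed

lemma box_config_near_eq:
  assumes p: "(k, l) \<in> box_config c r X Y" and q: "(k', l') \<in> box_config c r X Y"
    and switch: "no_parallel_switch (2 * c) (2 * r) X Y"
    and near: "k \<le> k'" "k' \<le> k + 1" "l \<le> l' + 1" "l' \<le> l + 1"
  shows "k = k' \<and> l = l'"
proof -
  have range: "k \<in> {1..4 * c}" "k' \<in> {1..4 * c}" "l \<in> {1..4 * r}" "l' \<in> {1..4 * r}"
    and p_pos: "even k \<longleftrightarrow> Y (block l)" "even l \<longleftrightarrow> X (block k)"
    and q_pos: "even k' \<longleftrightarrow> Y (block l')" "even l' \<longleftrightarrow> X (block k')"
    using p q unfolding mem_box_config by blast+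
  consider (same_block) "block k = block k'" | (crossing) "even k" "k' = k + 1"
    using block_crossing[OF near(1,2)] by blast
  then show ?thesis
  proof cases
    case same_block
    then have "l = l'"
      using p_pos(2) q_pos(2) near_parity_eq[OF near(3,4)] by simp
    then have "even k \<longleftrightarrow> even k'"
      using p_pos(1) q_pos(1) by simp
    then show ?thesis
      using same_block \<open>l = l'\<close> block_parity_eq by blast
  next
    case crossing
    define a where "a = block k"
    have "k = 2 * a"
      using even_block[OF crossing(1)] unfolding a_def .
    then have k: "k = 2 * a" "k' = 2 * a + 1" "block k' = a + 1"
      using crossing(2) by simp_all
    have "a \<in> {1..<2 * c}"
      using range(1,2) k by auto
    have "Y (block l)" "\<not> Y (block l')"
      using k p_pos(1) q_pos(1) by simp_all
    then have "block l \<noteq> block l'"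
      by metis
    then consider (rightwards) "even l" "l' = l + 1" | (leftwards) "even l'" "l = l' + 1"
      using block_crossing[of l l'] block_crossing[of l' l] near(3,4) by (cases "l \<le> l'") auto
    then show ?thesis
    proof cases
      case rightwards
      \<comment> \<open>X and Y both descend: the trees sit at (2a, 2b) and (2a + 1, 2b + 1).\<close>
      define b where "b = block l"
      have "l = 2 * b"
        using even_block[OF rightwards(1)] unfolding b_def .
      then have l: "l = 2 * b" "l' = 2 * b + 1" "block l' = b + 1"
        using rightwards(2) by simp_all
      have "b \<in> {1..<2 * r}"
        using range(3,4) l by auto
      have "X a" "\<not> X (a + 1)" "Y b" "\<not> Y (b + 1)"
        using p_pos(2) q_pos(2) k(3) l(2,3) rightwards(1) \<open>Y (block l)\<close> \<open>\<not> Y (block l')\<close>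
        by (simp_all add: a_def b_def)
      with switch \<open>a \<in> {1..<2 * c}\<close> \<open>b \<in> {1..<2 * r}\<close> show ?thesis
        unfolding no_parallel_switch_def by blast
    next
      case leftwards
      \<comment> \<open>X and Y both ascend: the trees sit at (2a, 2b + 1) and (2a + 1, 2b).\<close>
      define b where "b = block l'"
      have "l' = 2 * b"
        using even_block[OF leftwards(1)] unfolding b_def .
      then have l: "l' = 2 * b" "l = 2 * b + 1" "block l = b + 1"
        using leftwards(2) by simp_all
      have "b \<in> {1..<2 * r}"
        using range(3,4) l by auto
      have "\<not> X a" "X (a + 1)" "\<not> Y b" "Y (b + 1)"
        using p_pos(2) q_pos(2) k(3) l(2,3) leftwards(1) \<open>Y (block l)\<close> \<open>\<not> Y (block l')\<close>
        by (simp_all add: a_def b_def)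
      with switch \<open>a \<in> {1..<2 * c}\<close> \<open>b \<in> {1..<2 * r}\<close> show ?thesis
        unfolding no_parallel_switch_def by blast
    qed
  qed
qed

lemma box_config_nonadjacent:
  assumes "no_parallel_switch (2 * c) (2 * r) X Y"
    and "p \<in> box_config c r X Y" "q \<in> box_config c r X Y"
  shows "\<not> adjacent p q"
proof -
  obtain k l k' l' where pq: "p = (k, l)" "q = (k', l')"
    by fastforce
  show ?thesis
  proof (cases "k \<le> k'")
    case True
    then show ?thesis
      using box_config_near_eq[of k l c r X Y k' l'] assms pq unfolding adjacent_def by auto
  next
    case False
    then show ?thesis
      using box_config_near_eq[of k' l' c r X Y k l] assms pq unfolding adjacent_def by auto
  qed
qed

lemma box_config_switch_free:
  assumes nonadjacent: "\<forall>p \<in> box_config c r X Y. \<forall>q \<in> box_config c r X Y. \<not> adjacent p q"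
  shows "no_parallel_switch (2 * c) (2 * r) X Y"
  unfolding no_parallel_switch_def
proof (intro ballI)
  fix a b assume "a \<in> {1..<2 * c}" "b \<in> {1..<2 * r}"
  then have range: "2 * a \<in> {1..4 * c}" "2 * a + 1 \<in> {1..4 * c}"
    "2 * b \<in> {1..4 * r}" "2 * b + 1 \<in> {1..4 * r}"
    by auto
  have blocks: "block (2 * a) = a" "block (2 * a + 1) = a + 1"
    "block (2 * b) = b" "block (2 * b + 1) = b + 1"
    by simp_all
  have trees_apart: "\<not> adjacent p q" if "p \<in> box_config c r X Y" "q \<in> box_config c r X Y" for p q
    using nonadjacent that by blast
  show "\<not> (X a \<and> \<not> X (a + 1) \<and> Y b \<and> \<not> Y (b + 1)) \<and>
    \<not> (\<not> X a \<and> X (a + 1) \<and> \<not> Y b \<and> Y (b + 1))"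
  proof (intro conjI notI)
    assume "X a \<and> \<not> X (a + 1) \<and> Y b \<and> \<not> Y (b + 1)"
    then have "(2 * a, 2 * b) \<in> box_config c r X Y" "(2 * a + 1, 2 * b + 1) \<in> box_config c r X Y"
      unfolding mem_box_config blocks using range by simp_all
    moreover have "adjacent (2 * a, 2 * b) (2 * a + 1, 2 * b + 1)"
      unfolding adjacent_def by simp
    ultimately show False
      using trees_apart by blast
  next
    assume "\<not> X a \<and> X (a + 1) \<and> \<not> Y b \<and> Y (b + 1)"
    then have "(2 * a, 2 * b + 1) \<in> box_config c r X Y" "(2 * a + 1, 2 * b) \<in> box_config c r X Y"
      unfolding mem_box_config blocks using range by simp_all
    moreover have "adjacent (2 * a, 2 * b + 1) (2 * a + 1, 2 * b)"
      unfolding adjacent_def by simp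
    ultimately show False
      using trees_apart by blast
  qed
qed

lemma valid_box_config_iff:
  assumes "0 < c" "0 < r"
  shows "valid_config (4 * c) (4 * r) c r (box_config c r X Y) \<longleftrightarrow>
    card {a \<in> {1..2 * c}. X a} = c \<and> card {b \<in> {1..2 * r}. Y b} = r \<and>
    no_parallel_switch (2 * c) (2 * r) X Y"
proof -
  have grid: "box_config c r X Y \<subseteq> {1..4 * c} \<times> {1..4 * r}"
    unfolding box_config_def by auto
  have "{l. (k, l) \<in> box_config c r X Y} = {l. (l, k) \<in> box_config r c Y X}" for k
    by (simp add: box_config_converse[of c r X Y, symmetric])
  then have rows: "(\<forall>k \<in> {1..4 * c}. card {l. (k, l) \<in> box_config c r X Y} = r) \<longleftrightarrow>
      card {b \<in> {1..2 * r}. Y b} = r"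
    using box_config_columns_iff[OF \<open>0 < c\<close>, of r Y X] by simp
  have trees: "(\<forall>p \<in> box_config c r X Y. \<forall>q \<in> box_config c r X Y. \<not> adjacent p q) \<longleftrightarrow>
      no_parallel_switch (2 * c) (2 * r) X Y"
    using box_config_nonadjacent box_config_switch_free by metis
  show ?thesis
    unfolding valid_config_def box_config_columns_iff[OF \<open>0 < r\<close>] rows trees
    using grid by blast
qed

section \<open>The Shuriken arrangements\<close>

lemma box_config_cong:
  assumes X: "\<And>a. a \<in> {1..2 * c} \<Longrightarrow> X a \<longleftrightarrow> X' a"
    and Y: "\<And>b. b \<in> {1..2 * r} \<Longrightarrow> Y b \<longleftrightarrow> Y' b"
  shows "box_config c r X Y = box_config c r X' Y'"
proof (rule set_eqI)
  fix p
  obtain k l :: nat where p: "p = (k, l)"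
    by fastforce
  show "p \<in> box_config c r X Y \<longleftrightarrow> p \<in> box_config c r X' Y'"
  proof (cases "k \<in> {1..4 * c} \<and> l \<in> {1..4 * r}")
    case True
    then have "block k \<in> {1..2 * c}" "block l \<in> {1..2 * r}"
      using block_mem[of k "2 * c"] block_mem[of l "2 * r"] by (simp_all add: mult.assoc)
    then have "X (block k) \<longleftrightarrow> X' (block k)" "Y (block l) \<longleftrightarrow> Y' (block l)"
      using X Y by blast+
    then show ?thesis
      unfolding p mem_box_config by simp
  next
    case False
    then show ?thesis
      unfolding p mem_box_config by blast
  qed
qed

lemma box_config_reflect:
  assumes kl: "(k, l) \<in> box_config c r X Y"
  shows "(4 * c + 1 - k, l) \<in> box_config c r (\<lambda>a. X (2 * c + 1 - a)) (\<lambda>b. \<not> Y b)"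
proof -
  have k: "1 \<le> k" "k \<le> 4 * c" and l: "l \<in> {1..4 * r}"
    and parity: "even k \<longleftrightarrow> Y (block l)" "even l \<longleftrightarrow> X (block k)"
    using kl unfolding mem_box_config atLeastAtMost_iff by blast+
  have k2: "k \<le> 2 * (2 * c)"
    using k(2) by simp
  have "block k \<le> 2 * c"
    using block_mem[of k "2 * c"] k(1) k2 by simp
  moreover have "block (2 * (2 * c) + 1 - k) = 2 * c + 1 - block k"
    by (rule block_reflect[OF k(1) k2])
  ultimately have reflected_block: "2 * c + 1 - block (4 * c + 1 - k) = block k"
    by simp
  have reflected_parity: "even (4 * c + 1 - k) \<longleftrightarrow> odd k"
    using k(2) by simp
  have "4 * c + 1 - k \<in> {1..4 * c}"
    using k by auto
  then show ?thesis
    unfolding mem_box_config reflected_block reflected_parity using l parity by blast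
qed

lemma shuriken1_eq_box_config: "shuriken1 c r = box_config c r (\<lambda>a. a \<le> c) (\<lambda>b. r < b)"
proof
  show "shuriken1 c r \<subseteq> box_config c r (\<lambda>a. a \<le> c) (\<lambda>b. r < b)"
  proof
    fix p assume "p \<in> shuriken1 c r"
    then consider i j where "p = (2 * i - 1, 2 * j)" "1 \<le> i" "i \<le> c" "1 \<le> j" "j \<le> r"
      | i j where "p = (2 * i, 2 * j)" "1 \<le> i" "i \<le> c" "r < j" "j \<le> 2 * r"
      | i j where "p = (2 * i - 1, 2 * j - 1)" "c < i" "i \<le> 2 * c" "1 \<le> j" "j \<le> r"
      | i j where "p = (2 * i, 2 * j - 1)" "c < i" "i \<le> 2 * c" "r < j" "j \<le> 2 * r"
      unfolding shuriken1_def by blast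
    then show "p \<in> box_config c r (\<lambda>a. a \<le> c) (\<lambda>b. r < b)"
      by cases (simp_all add: mem_box_config block_double_pred, linarith+)
  qed
next
  show "box_config c r (\<lambda>a. a \<le> c) (\<lambda>b. r < b) \<subseteq> shuriken1 c r"
  proof (clarify)
    fix k l assume "(k, l) \<in> box_config c r (\<lambda>a. a \<le> c) (\<lambda>b. r < b)"
    then have range: "1 \<le> k" "k \<le> 4 * c" "1 \<le> l" "l \<le> 4 * r"
      and parity: "even k \<longleftrightarrow> r < block l" "even l \<longleftrightarrow> block k \<le> c"
      unfolding mem_box_config atLeastAtMost_iff by blast+
    have i: "1 \<le> block k" "block k \<le> 2 * c" and j: "1 \<le> block l" "block l \<le> 2 * r"
      using block_mem[of k "2 * c"] block_mem[of l "2 * r"] range by simp_all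
    consider "even k" "even l" | "even k" "odd l" | "odd k" "even l" | "odd k" "odd l"
      by blast
    then show "(k, l) \<in> shuriken1 c r"
    proof cases
      case 1
      then have "block k \<le> c" "r < block l"
        using parity not_le not_less by blast+
      with i j have "(2 * block k, 2 * block l) \<in> shuriken1 c r"
        unfolding shuriken1_def by blast
      then show ?thesis
        using 1 by (metis even_block)
    next
      case 2
      then have "c < block k" "r < block l"
        using parity not_le not_less by blast+
      with i j have "(2 * block k, 2 * block l - 1) \<in> shuriken1 c r"
        unfolding shuriken1_def by blast
      then show ?thesis
        using 2 by (metis even_block odd_block)
    next
      case 3
      then have "block k \<le> c" "block l \<le> r"
        using parity not_le not_less by blast+
      with i j have "(2 * block k - 1, 2 * block l) \<in> shuriken1 c r"
        unfolding shuriken1_def by blast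
      then show ?thesis
        using 3 by (metis even_block odd_block)
    next
      case 4
      then have "c < block k" "block l \<le> r"
        using parity not_le not_less by blast+
      with i j have "(2 * block k - 1, 2 * block l - 1) \<in> shuriken1 c r"
        unfolding shuriken1_def by blast
      then show ?thesis
        using 4 by (metis odd_block)
    qed
  qed
qed

lemma shuriken2_eq_box_config: "shuriken2 c r = box_config c r (\<lambda>a. c < a) (\<lambda>b. b \<le> r)"
proof
  have reflect_1_to_2: "box_config c r (\<lambda>a. 2 * c + 1 - a \<le> c) (\<lambda>b. \<not> r < b) =
      box_config c r (\<lambda>a. c < a) (\<lambda>b. b \<le> r)"
    by (rule box_config_cong) auto
  show "shuriken2 c r \<subseteq> box_config c r (\<lambda>a. c < a) (\<lambda>b. b \<le> r)"
  proof
    fix p assume "p \<in> shuriken2 c r"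
    then obtain k l where kl: "(k, l) \<in> box_config c r (\<lambda>a. a \<le> c) (\<lambda>b. r < b)"
      and p: "p = (4 * c + 1 - k, l)"
      unfolding shuriken2_def shuriken1_eq_box_config by auto
    show "p \<in> box_config c r (\<lambda>a. c < a) (\<lambda>b. b \<le> r)"
      using box_config_reflect[OF kl] unfolding p reflect_1_to_2 .
  qed
next
  have reflect_2_to_1: "box_config c r (\<lambda>a. c < 2 * c + 1 - a) (\<lambda>b. \<not> b \<le> r) =
      box_config c r (\<lambda>a. a \<le> c) (\<lambda>b. r < b)"
    by (rule box_config_cong) auto
  show "box_config c r (\<lambda>a. c < a) (\<lambda>b. b \<le> r) \<subseteq> shuriken2 c r"
  proof (clarify)
    fix k l assume kl: "(k, l) \<in> box_config c r (\<lambda>a. c < a) (\<lambda>b. b \<le> r)"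
    have reflected: "(4 * c + 1 - k, l) \<in> shuriken1 c r"
      using box_config_reflect[OF kl] unfolding shuriken1_eq_box_config reflect_2_to_1 .
    have "k \<le> 4 * c"
      using kl unfolding mem_box_config atLeastAtMost_iff by blast
    then show "(k, l) \<in> shuriken2 c r"
      unfolding shuriken2_def by (intro rev_image_eqI[OF reflected]) simp
  qed
qed

lemma valid_shuriken:
  assumes "0 < c" "0 < r"
  shows "valid_config (4 * c) (4 * r) c r (shuriken1 c r)"
    and "valid_config (4 * c) (4 * r) c r (shuriken2 c r)"
proof -
  have "{a \<in> {1..2 * c}. a \<le> c} = {1..c}" "{a \<in> {1..2 * c}. c < a} = {c + 1..2 * c}"
    "{b \<in> {1..2 * r}. r < b} = {r + 1..2 * r}" "{b \<in> {1..2 * r}. b \<le> r} = {1..r}"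
    by auto
  moreover have "no_parallel_switch (2 * c) (2 * r) (\<lambda>a. a \<le> c) (\<lambda>b. r < b)"
    "no_parallel_switch (2 * c) (2 * r) (\<lambda>a. c < a) (\<lambda>b. b \<le> r)"
    unfolding no_parallel_switch_def by auto
  ultimately show "valid_config (4 * c) (4 * r) c r (shuriken1 c r)"
    "valid_config (4 * c) (4 * r) c r (shuriken2 c r)"
    unfolding shuriken1_eq_box_config shuriken2_eq_box_config valid_box_config_iff[OF assms] by simp_all
qed

lemma valid_config_square_cases:
  assumes "0 < c" "0 < r" and S: "valid_config (4 * c) (4 * r) c r S"
  shows "S = shuriken1 c r \<or> S = shuriken2 c r"
proof -
  define X where "X a \<longleftrightarrow> tree_right S a 1" for a
  define Y where "Y b \<longleftrightarrow> tree_right (S\<inverse>) b 1" for b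
  have S_eq: "S = box_config c r X Y"
    unfolding X_def Y_def by (rule valid_config_eq_box_config[OF S])
  with S have "card {a \<in> {1..2 * c}. X a} = c" "card {b \<in> {1..2 * r}. Y b} = r"
    "no_parallel_switch (2 * c) (2 * r) X Y"
    by (simp_all add: valid_box_config_iff[OF assms(1,2)])
  then consider
      "\<forall>a \<in> {1..2 * c}. X a \<longleftrightarrow> a \<le> c" "\<forall>b \<in> {1..2 * r}. Y b \<longleftrightarrow> r < b"
    | "\<forall>a \<in> {1..2 * c}. X a \<longleftrightarrow> c < a" "\<forall>b \<in> {1..2 * r}. Y b \<longleftrightarrow> b \<le> r"
    using no_parallel_switch_thresholds[OF assms(1,2)] by blast
  then show ?thesis
  proof cases
    case 1
    then have "S = shuriken1 c r"
      unfolding S_eq shuriken1_eq_box_config by (intro box_config_cong) simp_all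
    then show ?thesis ..
  next
    case 2
    then have "S = shuriken2 c r"
      unfolding S_eq shuriken2_eq_box_config by (intro box_config_cong) simp_all
    then show ?thesis ..
  qed
qed

theorem theorem2:
  fixes c r :: nat
  assumes "0 < c" and "0 < r"
  shows "(\<forall>m n S. 1 \<le> m \<and> 1 \<le> n \<and> (m, n) \<noteq> (1, 1) \<and> valid_config m n c r S
            \<longrightarrow> 4*c \<le> m \<and> 4*r \<le> n)
       \<and> ((\<exists>S. valid_config 1 1 c r S) \<longleftrightarrow> c = 1 \<and> r = 1)
       \<and> {S. valid_config (4*c) (4*r) c r S} = {shuriken1 c r, shuriken2 c r}
       \<and> shuriken1 c r \<noteq> shuriken2 c r"
proof (intro conjI)
  show "\<forall>m n S. 1 \<le> m \<and> 1 \<le> n \<and> (m, n) \<noteq> (1, 1) \<and> valid_config m n c r S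
            \<longrightarrow> 4*c \<le> m \<and> 4*r \<le> n"
    using valid_config_lower_bound[OF assms] by blast
  show "(\<exists>S. valid_config 1 1 c r S) \<longleftrightarrow> c = 1 \<and> r = 1"
    by (rule valid_config_1_1_iff[OF assms])
  show "{S. valid_config (4*c) (4*r) c r S} = {shuriken1 c r, shuriken2 c r}"
    using valid_config_square_cases[OF assms] valid_shuriken[OF assms] by blast
  have "(1, 2) \<in> shuriken1 c r" "(1, 2) \<notin> shuriken2 c r"
    unfolding shuriken1_eq_box_config shuriken2_eq_box_config mem_box_config using assms by simp_all
  then show "shuriken1 c r \<noteq> shuriken2 c r"
    by blast
qed

end
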